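(* Let $\mathbb{T}=\mathbb{R}/\mathbb{Z}$ with Haar probability measure $\mu$ and inner measure $\mu_*$. There exists a set $B\subset\mathbb{T}$ such that for all positive integers $m,n$, \[\sup_{F\subset B,\ F\text{ compact}}\mu(mF-nF)\neq\mu_*(mB-nB).\]
   Context: $\mu_*(S)=\sup\{\mu(K):K\subset S,\ K\text{ compact}\}$. $mB-nB=\{b_1+\dots+b_m-b_1'-\dots-b_n':b_i,b_j'\in B\}$. *)

theory Defs
  imports "HOL-Analysis.Analysis"
begin

text \<open>The torus T = R/Z, realised as the unit circle in the complex plane
 (group operation: multiplication; group inverse: inverse).  The map
 t \<mapsto> cis (2 pi t) is the quotient map R \<rightarrow> R/Z.\<close>

definition torus :: "complex set" where
  "torus = {z. cmod z = 1}"

definition haar :: "complex set \<Rightarrow> real" where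
  "haar S = measure lebesgue {t \<in> {0..<1}. cis (2 * pi * t) \<in> S}"

definition inner_haar :: "complex set \<Rightarrow> real" where
  "inner_haar S = Sup {haar K | K. K \<subseteq> S \<and> compact K}"

text \<open>mB - nB, written multiplicatively.\<close>
definition sumdiff :: "nat \<Rightarrow> nat \<Rightarrow> complex set \<Rightarrow> complex set" where
  "sumdiff m n B = {(\<Prod>i<m. b i) * (\<Prod>j<n. inverse (c j)) | b c.
      (\<forall>i<m. b i \<in> B) \<and> (\<forall>j<n. c j \<in> B)}"

end

theory Submission
  imports Defs
begin

text \<open>
  Index a transfinite recursion of length at most the continuum by the pairs (t, K) of a point
  t of the circle and an uncountable compact set K.  At stage (t, K) choose x with x and x t
  avoiding the witnesses chosen so far, and a witness d \<in> K avoiding all points already put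
  into B; fewer than continuum many values are excluded each time, while the circle and every K
  (an uncountable closed set contains a perfect set) have continuum many points.  The resulting
  B contains 1 and, for every t, points x and x t, so mB - nB contains B - B, the whole circle,
  and has inner measure 1.  Yet every compact F \<subseteq> B is countable, so mF - nF is countable
  and null.
\<close>

unbundle cardinal_syntax

definition below_continuum :: "'a set \<Rightarrow> bool" where
  "below_continuum S \<longleftrightarrow> |S| <o |UNIV::real set|"

lemma below_continuum_image: "below_continuum S \<Longrightarrow> below_continuum (f ` S)"
  unfolding below_continuum_def using card_of_image ordLeq_ordLess_trans by blast

lemma below_continuum_Un:
  "below_continuum S \<Longrightarrow> below_continuum T \<Longrightarrow> below_continuum (S \<union> T)"
  unfolding below_continuum_def using card_of_Un_ordLess_infinite infinite_UNIV_char_0 by blast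

lemma below_continuum_finite: "finite S \<Longrightarrow> below_continuum S"
  unfolding below_continuum_def
  by (rule finite_ordLess_infinite[OF card_of_Well_order card_of_Well_order])
    (auto simp: Field_card_of infinite_UNIV_char_0)

lemma below_continuum_underS:
  assumes "|I| \<le>o |UNIV::real set|"
  shows "below_continuum (underS (card_of I) i)"
proof (cases "i \<in> I")
  case True
  then have "|underS (card_of I) i| <o |I|"
    using card_of_underS[OF card_of_Card_order] by (simp add: Field_card_of)
  then show ?thesis unfolding below_continuum_def using assms by (rule ordLess_ordLeq_trans)
next
  case False
  then have "underS (card_of I) i = {}" by (auto simp: underS_def Field_card_of dest: FieldI2)
  then show ?thesis by (simp add: below_continuum_finite)
qed

lemma not_subset_below_continuum:
  "|UNIV::real set| \<le>o |K| \<Longrightarrow> below_continuum S \<Longrightarrow> \<not> K \<subseteq> S"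
  unfolding below_continuum_def by (meson card_of_mono1 not_ordLess_ordLeq ordLeq_transitive)

lemma exists_fresh_pair:
  fixes t :: "'a::field"
  assumes "|UNIV::real set| \<le>o |T|" "|UNIV::real set| \<le>o |K|"
    and "below_continuum W" "below_continuum P" "t \<noteq> 0"
  shows "\<exists>x d. x \<in> T \<and> x \<notin> W \<and> x * t \<notin> W \<and> d \<in> K \<and> d \<notin> P \<union> {x, x * t, 1}"
proof -
  have "\<not> T \<subseteq> W \<union> (\<lambda>w. w / t) ` W"
    using assms by (intro not_subset_below_continuum below_continuum_Un below_continuum_image)
  then obtain x where "x \<in> T" "x \<notin> W" "x \<notin> (\<lambda>w. w / t) ` W" by blast
  moreover have "x * t \<notin> W"
    using \<open>x \<notin> (\<lambda>w. w / t) ` W\<close> \<open>t \<noteq> 0\<close>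
    by (metis image_eqI nonzero_mult_div_cancel_right)
  moreover have "\<not> K \<subseteq> P \<union> {x, x * t, 1}"
    by (intro not_subset_below_continuum[OF assms(2)] below_continuum_Un[OF assms(4)]
        below_continuum_finite) simp
  ultimately show ?thesis by blast
qed

lemma wfrec_choice:
  assumes "wf r"
    and locality: "\<And>g g' i. (\<And>j. (j, i) \<in> r \<Longrightarrow> g j = g' j) \<Longrightarrow> P g i = P g' i"
    and choice: "\<And>g i. i \<in> I \<Longrightarrow> \<exists>p. P g i p"
  obtains h where "\<And>i. i \<in> I \<Longrightarrow> P h i (h i)"
proof
  define h where "h = wfrec r (\<lambda>g i. SOME p. P g i p)"
  fix i assume "i \<in> I"
  have "P (cut h r i) i = P h i" by (rule locality) (simp add: cut_apply)
  moreover have "h i = (SOME p. P (cut h r i) i p)"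
    unfolding h_def by (subst wfrec[OF \<open>wf r\<close>]) simp
  ultimately show "P h i (h i)" using someI_ex[OF choice[OF \<open>i \<in> I\<close>]] by metis
qed

lemma exists_fresh_sequences:
  fixes T :: "'a::field set" and KK :: "'a set set"
  assumes card_index: "|T \<times> KK| \<le>o |UNIV::real set|"
    and card_K: "\<And>K. K \<in> KK \<Longrightarrow> |UNIV::real set| \<le>o |K|"
    and card_T: "|UNIV::real set| \<le>o |T|"
    and "0 \<notin> T"
  obtains x d :: "'a \<times> 'a set \<Rightarrow> 'a"
  where "\<And>i. i \<in> T \<times> KK \<Longrightarrow> x i \<in> T \<and> d i \<in> snd i \<and> d i \<notin> {x i, x i * fst i, 1}"
    and "\<And>i j. j \<in> underS |T \<times> KK| i \<Longrightarrow>
           d i \<notin> {x j, x j * fst j} \<and> d j \<notin> {x i, x i * fst i}"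
proof -
  define R where "R = |T \<times> KK|"
  define pts where
    "pts g i = (\<lambda>j. fst (g j)) ` underS R i \<union> (\<lambda>j. fst (g j) * fst j) ` underS R i"
    for g :: "'a \<times> 'a set \<Rightarrow> 'a \<times> 'a" and i
  define wits where "wits g i = (\<lambda>j. snd (g j)) ` underS R i"
    for g :: "'a \<times> 'a set \<Rightarrow> 'a \<times> 'a" and i
  \<comment> \<open>At stage i = (t, K) the value p = (x, d) puts x and x t into B and d \<in> K outside it.\<close>
  define good where "good g i p \<longleftrightarrow>
      fst p \<in> T \<and> fst p \<notin> wits g i \<and> fst p * fst i \<notin> wits g i \<and>
      snd p \<in> snd i \<and> snd p \<notin> pts g i \<union> {fst p, fst p * fst i, 1}" for g i p
  have wf: "wf (R - Id)"
    unfolding R_def using Card_order_wo_rel wo_rel.WF card_of_Card_order by blast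
  have small: "below_continuum (underS R i)" for i
    unfolding R_def using card_index by (rule below_continuum_underS)
  have good_local: "good g i = good g' i" if "\<And>j. (j, i) \<in> R - Id \<Longrightarrow> g j = g' j" for g g' i
  proof -
    have "pts g i = pts g' i" "wits g i = wits g' i"
      using that unfolding pts_def wits_def underS_def by (auto intro!: image_cong)
    then show ?thesis unfolding good_def by simp
  qed
  have good_exists: "\<exists>p. good g i p" if "i \<in> T \<times> KK" for g i
  proof -
    obtain t K where i: "i = (t, K)" "t \<in> T" "K \<in> KK"
      using \<open>i \<in> T \<times> KK\<close> by auto
    have "below_continuum (wits g i)" "below_continuum (pts g i)"
      unfolding wits_def pts_def by (intro below_continuum_Un below_continuum_image small)+
    moreover have "t \<noteq> 0" using i \<open>0 \<notin> T\<close> by auto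
    ultimately obtain x d where "x \<in> T" "x \<notin> wits g i" "x * t \<notin> wits g i"
      "d \<in> K" "d \<notin> pts g i \<union> {x, x * t, 1}"
      using exists_fresh_pair[OF card_T card_K[OF i(3)]] by blast
    then show ?thesis unfolding good_def i(1) by (intro exI[of _ "(x, d)"]) simp
  qed
  obtain h where h: "\<And>i. i \<in> T \<times> KK \<Longrightarrow> good h i (h i)"
    using wfrec_choice[of "R - Id" good "T \<times> KK", OF wf good_local good_exists] by blast
  show thesis
  proof (rule that[of "\<lambda>i. fst (h i)" "\<lambda>i. snd (h i)"])
    show "fst (h i) \<in> T \<and> snd (h i) \<in> snd i \<and>
        snd (h i) \<notin> {fst (h i), fst (h i) * fst i, 1}" if "i \<in> T \<times> KK" for i
      using h[OF that] unfolding good_def by simp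
    fix i j assume "j \<in> underS |T \<times> KK| i"
    then have ji: "j \<in> underS R i" and i: "i \<in> T \<times> KK"
      unfolding R_def by (auto simp: underS_def Field_card_of dest: FieldI2)
    have "fst (h j) \<in> pts h i" "fst (h j) * fst j \<in> pts h i" "snd (h j) \<in> wits h i"
      using ji unfolding pts_def wits_def by blast+
    then show "snd (h i) \<notin> {fst (h j), fst (h j) * fst j} \<and>
        snd (h j) \<notin> {fst (h i), fst (h i) * fst i}"
      using h[OF i] unfolding good_def by auto
  qed
qed

lemma exists_Bernstein_quotient_set:
  fixes T :: "'a::field set" and KK :: "'a set set"
  assumes card_index: "|T \<times> KK| \<le>o |UNIV::real set|"
    and card_K: "\<And>K. K \<in> KK \<Longrightarrow> |UNIV::real set| \<le>o |K|"
    and card_T: "|UNIV::real set| \<le>o |T|"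
    and T: "0 \<notin> T" "1 \<in> T" "\<And>x y. x \<in> T \<Longrightarrow> y \<in> T \<Longrightarrow> x * y \<in> T"
    and "KK \<noteq> {}"
  shows "\<exists>B \<subseteq> T. 1 \<in> B \<and> (\<forall>t\<in>T. \<exists>x\<in>B. x * t \<in> B) \<and> (\<forall>K\<in>KK. \<not> K \<subseteq> B)"
proof -
  obtain x d :: "'a \<times> 'a set \<Rightarrow> 'a"
    where xd: "\<And>i. i \<in> T \<times> KK \<Longrightarrow> x i \<in> T \<and> d i \<in> snd i \<and> d i \<notin> {x i, x i * fst i, 1}"
      and fresh: "\<And>i j. j \<in> underS |T \<times> KK| i \<Longrightarrow>
                  d i \<notin> {x j, x j * fst j} \<and> d j \<notin> {x i, x i * fst i}"
    using exists_fresh_sequences[OF card_index card_K card_T T(1)] by blast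
  define B where "B = insert 1 (\<Union>i\<in>T \<times> KK. {x i, x i * fst i})"
  have d_notin: "d i \<notin> B" if "i \<in> T \<times> KK" for i
  proof -
    have "d i \<notin> {x j, x j * fst j}" if "j \<in> T \<times> KK" for j
    proof -
      have "(j, i) \<in> |T \<times> KK| \<or> (i, j) \<in> |T \<times> KK|"
        using \<open>i \<in> T \<times> KK\<close> \<open>j \<in> T \<times> KK\<close>
        by (metis Card_order_wo_rel card_of_Card_order Field_card_of wo_rel.TOTALS)
      then consider "j = i" | "j \<in> underS |T \<times> KK| i" | "i \<in> underS |T \<times> KK| j"
        unfolding underS_def by blast
      then show ?thesis
      proof cases
        case 1
        then show ?thesis using xd[OF \<open>i \<in> T \<times> KK\<close>] by simp
      next
        case 2
        then show ?thesis using fresh by simp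
      next
        case 3
        then show ?thesis using fresh by simp
      qed
    qed
    then show ?thesis using xd[OF that] unfolding B_def by blast
  qed
  have "B \<subseteq> T" unfolding B_def using xd T(2,3) by auto
  moreover have "\<exists>y\<in>B. y * t \<in> B" if "t \<in> T" for t
  proof -
    obtain K where "K \<in> KK" using \<open>KK \<noteq> {}\<close> by blast
    with that show ?thesis unfolding B_def by force
  qed
  moreover have "\<not> K \<subseteq> B" if "K \<in> KK" for K
    using d_notin[of "(1, K)"] xd[of "(1, K)"] that T(2) by auto
  ultimately show ?thesis unfolding B_def by blast
qed

lemma derived_set_of_euclidean: "euclidean derived_set_of S = {x. x islimpt S}"
  unfolding derived_set_of_def islimpt_def by auto

lemma uncountable_closed_imp_perfect_subset:
  fixes P :: "'a::euclidean_space set"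
  assumes "closed P" "uncountable P"
  obtains C where "C \<subseteq> P" "C \<noteq> {}" "euclidean derived_set_of C = C"
proof -
  obtain U :: "nat \<Rightarrow> 'a set" where U_open: "\<And>n. open (U n)"
    and U_basis: "\<And>S. open S \<Longrightarrow> \<exists>k. S = \<Union>{U n |n. n \<in> k}"
    by (rule univ_second_countable_sequence) blast
  define N where "N = {n. countable (U n \<inter> P)}"
  define C where "C = P - (\<Union>n\<in>N. U n)"
  have "countable (\<Union>n\<in>N. U n \<inter> P)" by (rule countable_UN) (auto simp: N_def)
  then have "countable (P - C)" by (rule countable_subset[rotated]) (auto simp: C_def)
  then have "C \<noteq> {}" using assms(2) by (metis Diff_empty)
  have "closed C" unfolding C_def using assms(1) U_open by blast
  have "x islimpt C" if "x \<in> C" for x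
  proof (rule islimptI)
    fix S assume "x \<in> S" "open S"
    then obtain k where "S = \<Union>{U n |n. n \<in> k}" using U_basis by blast
    then obtain n where "x \<in> U n" "U n \<subseteq> S" using \<open>x \<in> S\<close> by auto
    then have "n \<notin> N" using \<open>x \<in> C\<close> unfolding C_def by blast
    then have "uncountable (U n \<inter> P)" unfolding N_def by simp
    then have "\<not> U n \<inter> P \<subseteq> insert x (P - C)"
      using \<open>countable (P - C)\<close> by (metis countable_insert countable_subset)
    then show "\<exists>y\<in>C. y \<in> S \<and> y \<noteq> x" using \<open>U n \<subseteq> S\<close> by blast
  qed
  then have "euclidean derived_set_of C = C"
    using \<open>closed C\<close> closed_limpt unfolding derived_set_of_euclidean by blast
  then show thesis using that \<open>C \<noteq> {}\<close> unfolding C_def by blast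
qed

lemma continuum_le_uncountable_closed:
  fixes P :: "'a::euclidean_space set"
  assumes "closed P" "uncountable P"
  shows "|UNIV::real set| \<le>o |P|"
proof -
  obtain C where "C \<subseteq> P" "C \<noteq> {}" "euclidean derived_set_of C = C"
    using uncountable_closed_imp_perfect_subset[OF assms] .
  then have "(UNIV::real set) \<lesssim> C"
    using lepoll_perfect_set completely_metrizable_space_euclidean by blast
  then have "(UNIV::real set) \<lesssim> P" using \<open>C \<subseteq> P\<close> lepoll_trans subset_imp_lepoll by blast
  then show ?thesis unfolding lepoll_def card_of_ordLeq .
qed

lemma card_of_closed_sets_le_continuum:
  "|{K :: 'a::euclidean_space set. closed K}| \<le>o |UNIV::real set|"
proof -
  obtain U :: "nat \<Rightarrow> 'a set" where U: "\<And>S. open S \<Longrightarrow> \<exists>k. S = \<Union>{U n |n. n \<in> k}"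
    by (rule univ_second_countable_sequence) blast
  have "K = - (\<Union>n\<in>{n. U n \<inter> K = {}}. U n)" if "closed K" for K
  proof -
    obtain k where k: "- K = \<Union>{U n |n. n \<in> k}"
      using U[of "- K"] \<open>closed K\<close> by (auto simp: open_Compl)
    have "- K \<subseteq> (\<Union>n\<in>{n. U n \<inter> K = {}}. U n)"
    proof
      fix x assume "x \<in> - K"
      then obtain n where "n \<in> k" "x \<in> U n" unfolding k by blast
      moreover have "U n \<inter> K = {}" using k \<open>n \<in> k\<close> by auto
      ultimately show "x \<in> (\<Union>n\<in>{n. U n \<inter> K = {}}. U n)" by blast
    qed
    then show ?thesis by blast
  qed
  then have "inj_on (\<lambda>K. {n. U n \<inter> K = {}}) {K. closed K}"
    by (intro inj_onI) (metis mem_Collect_eq)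
  then have "|{K :: 'a set. closed K}| \<le>o |UNIV::nat set set|"
    unfolding card_of_ordLeq[symmetric] by blast
  also have "|UNIV::nat set set| \<le>o |UNIV::real set|"
    using nat_sets_eqpoll_reals eqpoll_iff_card_of_ordIso ordIso_iff_ordLeq by metis
  finally show ?thesis .
qed

lemma card_of_Times_closed_sets_le_continuum:
  fixes T :: "'a::euclidean_space set" and KK :: "'a set set"
  assumes "\<And>K. K \<in> KK \<Longrightarrow> closed K"
  shows "|T \<times> KK| \<le>o |UNIV::real set|"
proof -
  let ?C = "{K :: 'a set. closed K}"
  have "inj_on (\<lambda>(x, K). ({x}, K)) (T \<times> KK)" by (auto simp: inj_on_def)
  moreover have "(\<lambda>(x, K). ({x}, K)) ` (T \<times> KK) \<subseteq> ?C \<times> ?C" using assms by auto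
  ultimately have "|T \<times> KK| \<le>o |?C \<times> ?C|" unfolding card_of_ordLeq[symmetric] by blast
  also have "|?C \<times> ?C| \<le>o |(UNIV::real set) \<times> ?C|"
    by (rule card_of_Times_mono1[OF card_of_closed_sets_le_continuum])
  also have "|(UNIV::real set) \<times> ?C| \<le>o |(UNIV::real set) \<times> (UNIV::real set)|"
    by (rule card_of_Times_mono2[OF card_of_closed_sets_le_continuum])
  also have "|(UNIV::real set) \<times> (UNIV::real set)| \<le>o |UNIV::real set|"
    using card_of_Times_same_infinite[of "UNIV::real set"] ordIso_iff_ordLeq
    by (metis infinite_UNIV_char_0)
  finally show ?thesis .
qed

lemma compact_torus: "compact torus"
  using compact_sphere[of 0 1] by (simp add: torus_def sphere_def dist_norm)

lemma uncountable_torus: "uncountable torus"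
proof (rule connected_uncountable[of _ 1 "-1"])
  show "connected torus"
    using connected_sphere[of "0::complex" 1] by (simp add: torus_def sphere_def dist_norm)
qed (auto simp: torus_def)

lemma cis_2pi_inj_on_unit_interval: "inj_on (\<lambda>t. cis (2 * pi * t)) {0..<1}"
proof (rule inj_onI)
  fix t s :: real
  assume ts: "t \<in> {0..<1}" "s \<in> {0..<1}" and "cis (2 * pi * t) = cis (2 * pi * s)"
  then have "exp (\<i> * complex_of_real (2 * pi * (t - s))) = 1"
    by (simp add: cis_conv_exp right_diff_distrib exp_diff)
  then obtain n :: int where "2 * pi * (t - s) = 2 * n * pi" by (auto simp: exp_eq_1)
  then have "t - s = n" by simp
  moreover have "\<bar>t - s\<bar> < 1" using ts by auto
  ultimately have "n = 0" by linarith
  with \<open>t - s = n\<close> show "t = s" by simp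
qed

lemma haar_countable:
  assumes "countable S"
  shows "haar S = 0"
proof -
  let ?Q = "{t \<in> {0..<1}. cis (2 * pi * t) \<in> S}"
  have "countable ((\<lambda>t. cis (2 * pi * t)) ` ?Q)" by (rule countable_subset[OF _ assms]) blast
  then have "countable ?Q"
    using cis_2pi_inj_on_unit_interval
    by (metis (no_types, lifting) countable_image_inj_on inj_on_subset mem_Collect_eq subsetI)
  then have "?Q \<in> null_sets lebesgue"
    by (intro null_sets_completionI countable_imp_null_set_lborel)
  then show ?thesis unfolding haar_def by (rule measure_eq_0_null_sets)
qed

lemma haar_le_1: "haar S \<le> 1"
proof (cases "{t \<in> {0..<1}. cis (2 * pi * t) \<in> S} \<in> sets lebesgue")
  case True
  then have "haar S \<le> measure lebesgue {0..<1::real}"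
    unfolding haar_def by (intro measure_mono_fmeasurable bounded_set_imp_lmeasurable) auto
  then show ?thesis by simp
qed (simp add: haar_def measure_notin_sets)

lemma haar_torus: "haar torus = 1"
proof -
  have "{t \<in> {0..<1}. cis (2 * pi * t) \<in> torus} = {0..<1::real}" by (auto simp: torus_def)
  then show ?thesis unfolding haar_def by simp
qed

lemma inner_haar_eq_1:
  assumes "torus \<subseteq> S"
  shows "inner_haar S = 1"
proof -
  have "1 \<in> {haar K | K. K \<subseteq> S \<and> compact K}" using assms compact_torus haar_torus by force
  moreover have "\<And>x. x \<in> {haar K | K. K \<subseteq> S \<and> compact K} \<Longrightarrow> x \<le> 1"
    using haar_le_1 by blast
  ultimately show ?thesis unfolding inner_haar_def by (meson cSup_eq_maximum)
qed

lemma countable_sumdiff: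
  assumes "countable F"
  shows "countable (sumdiff m n F)"
proof -
  define f where "f = (\<lambda>(b, c). (\<Prod>i<m. b i) * (\<Prod>j<n. inverse (c j :: complex)))"
  have "sumdiff m n F \<subseteq> f ` (PiE {..<m} (\<lambda>_. F) \<times> PiE {..<n} (\<lambda>_. F))"
  proof
    fix z assume "z \<in> sumdiff m n F"
    then obtain b c where z: "z = (\<Prod>i<m. b i) * (\<Prod>j<n. inverse (c j))"
      and "\<forall>i<m. b i \<in> F" "\<forall>j<n. c j \<in> F"
      unfolding sumdiff_def by blast
    then have "(restrict b {..<m}, restrict c {..<n}) \<in>
        PiE {..<m} (\<lambda>_. F) \<times> PiE {..<n} (\<lambda>_. F)"
      by (simp add: restrict_PiE_iff)
    moreover have "(\<Prod>i<m. restrict b {..<m} i) = (\<Prod>i<m. b i)"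
      "(\<Prod>j<n. inverse (restrict c {..<n} j)) = (\<Prod>j<n. inverse (c j))"
      by (auto intro: prod.cong)
    then have "z = f (restrict b {..<m}, restrict c {..<n})" unfolding z f_def by simp
    ultimately show "z \<in> f ` (PiE {..<m} (\<lambda>_. F) \<times> PiE {..<n} (\<lambda>_. F))" by blast
  qed
  moreover have "countable (PiE {..<m} (\<lambda>_. F) \<times> PiE {..<n} (\<lambda>_. F))"
    using assms by (intro countable_SIGMA countable_PiE finite_lessThan)
  ultimately show ?thesis by (rule countable_subset[OF _ countable_image])
qed

lemma torus_subset_sumdiff:
  assumes "0 < m" "0 < n" "1 \<in> B" "0 \<notin> B" and quotients: "\<forall>t\<in>torus. \<exists>x\<in>B. x * t \<in> B"
  shows "torus \<subseteq> sumdiff m n B"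
proof
  fix t assume "t \<in> torus"
  then obtain x where x: "x \<in> B" "x * t \<in> B" using quotients by blast
  obtain m' n' where mn: "m = Suc m'" "n = Suc n'" using assms(1,2) gr0_conv_Suc by blast
  define b where "b i = (if i = 0 then x * t else 1)" for i :: nat
  define c where "c j = (if j = 0 then x else 1)" for j :: nat
  have "x \<noteq> 0" using x assms(4) by blast
  then have "t = (\<Prod>i<m. b i) * (\<Prod>j<n. inverse (c j))"
    unfolding mn prod.lessThan_Suc_shift by (simp add: b_def c_def)
  moreover have "\<forall>i<m. b i \<in> B" "\<forall>j<n. c j \<in> B" using x assms(3) by (auto simp: b_def c_def)
  ultimately show "t \<in> sumdiff m n B" unfolding sumdiff_def by blast
qed

lemma exists_torus_subset_with_countable_compacts:
  "\<exists>B \<subseteq> torus. 1 \<in> B \<and> (\<forall>t\<in>torus. \<exists>x\<in>B. x * t \<in> B) \<and>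
     (\<forall>F. F \<subseteq> B \<and> compact F \<longrightarrow> countable F)"
proof -
  define KK where "KK = {K. compact K \<and> K \<subseteq> torus \<and> uncountable K}"
  have "|torus \<times> KK| \<le>o |UNIV::real set|"
    by (rule card_of_Times_closed_sets_le_continuum) (simp add: KK_def compact_imp_closed)
  moreover have "|UNIV::real set| \<le>o |K|" if "K \<in> KK" for K
    using that unfolding KK_def by (simp add: continuum_le_uncountable_closed compact_imp_closed)
  moreover have "torus \<in> KK" unfolding KK_def using compact_torus uncountable_torus by blast
  moreover have "0 \<notin> torus" "1 \<in> torus" "\<And>x y. x \<in> torus \<Longrightarrow> y \<in> torus \<Longrightarrow> x * y \<in> torus"
    by (simp_all add: torus_def norm_mult)
  ultimately obtain B where B: "B \<subseteq> torus" "1 \<in> B" "\<forall>t\<in>torus. \<exists>x\<in>B. x * t \<in> B"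
    and missing: "\<forall>K\<in>KK. \<not> K \<subseteq> B"
    using exists_Bernstein_quotient_set[of torus KK] by blast
  have "countable F" if "F \<subseteq> B" "compact F" for F
  proof (rule ccontr)
    assume "uncountable F"
    with that B(1) have "F \<in> KK" unfolding KK_def by blast
    with missing \<open>F \<subseteq> B\<close> show False by blast
  qed
  with B show ?thesis by blast
qed

theorem proposition5p4:
  shows "\<exists>B \<subseteq> torus. \<forall>m n :: nat. 0 < m \<longrightarrow> 0 < n \<longrightarrow>
           Sup {haar (sumdiff m n F) | F. F \<subseteq> B \<and> compact F}
             \<noteq> inner_haar (sumdiff m n B)"
proof -
  obtain B where B: "B \<subseteq> torus" "1 \<in> B" "\<forall>t\<in>torus. \<exists>x\<in>B. x * t \<in> B"
    and compacts: "\<forall>F. F \<subseteq> B \<and> compact F \<longrightarrow> countable F"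
    using exists_torus_subset_with_countable_compacts by blast
  have "0 \<notin> B" using B(1) by (auto simp: torus_def)
  have separation:
    "Sup {haar (sumdiff m n F) | F. F \<subseteq> B \<and> compact F} \<noteq> inner_haar (sumdiff m n B)"
    if "0 < m" "0 < n" for m n
  proof -
    have "{haar (sumdiff m n F) | F. F \<subseteq> B \<and> compact F} = {0}"
      using compacts by (auto intro!: haar_countable countable_sumdiff exI[of _ "{}"])
    moreover have "torus \<subseteq> sumdiff m n B"
      using that B(2) \<open>0 \<notin> B\<close> B(3) by (rule torus_subset_sumdiff)
    then have "inner_haar (sumdiff m n B) = 1" by (rule inner_haar_eq_1)
    ultimately show ?thesis by simp
  qed
  show ?thesis by (intro exI[of _ B] conjI allI impI B(1) separation)
qed

end
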